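(* Let $\alpha,\beta,\gamma\in\mathbf S^2$ and put $A=\mathcal R_\gamma^\pi\circ\mathcal R_\beta^\pi\circ\mathcal R_\alpha^\pi$ and $B=\mathcal R_\alpha^\pi\circ\mathcal R_\gamma^\pi\circ\mathcal R_\beta^\pi$. Suppose $A$ is not the identity. Then $A$ and $B$ have the same axis of rotation if and only if one of the following holds: (i) $\mathbf R\beta=\mathbf R\gamma$; (ii) $\langle\gamma,\beta\rangle_E=0$ and $\det_3(\alpha\beta\gamma)^2\neq1$; (iii) $\langle\alpha,\beta\rangle_E=0=\langle\alpha,\gamma\rangle_E$ and $\langle\gamma,\beta\rangle_E\neq0$. Moreover, if $b\in\mathbf S^2$ lies on this common axis and one sets $c=\mathcal R_\alpha^\pi(b)$ and $a=\mathcal R_\gamma^\pi(b)$, then in case (i) $b=c=\pm\alpha$; in case (ii) $c=-b$; and in case (iii) $-a=b=c=\pm\alpha$.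
   Context: For a nonzero $v\in\mathbf R^3$ and $\phi\in\mathbf R$, $\mathcal R_v^\phi$ denotes the rotation of $\mathbf R^3$ by angle $\phi$ about the axis $\mathbf Rv$; $\mathcal R_v^\pi$ is the half-turn about $\mathbf Rv$. $\langle\cdot,\cdot\rangle_E$ is the Euclidean inner product, $\mathbf S^2$ the unit sphere, $\det_3(\alpha\beta\gamma)$ the determinant with columns $\alpha,\beta,\gamma$. The axis of a rotation different from the identity is its (one-dimensional) fixed line. *)

theory Defs
  imports "HOL-Analysis.Analysis"
begin

text \<open>Rotation of R^3 by angle phi about the axis R v (v nonzero), via Rodrigues' formula
  with the unit vector u = v / |v| (right-hand orientation).\<close>
definition rot :: "real^3 \<Rightarrow> real \<Rightarrow> real^3 \<Rightarrow> real^3" where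
  "rot v \<phi> x = (let u = (1 / norm v) *\<^sub>R v in
      cos \<phi> *\<^sub>R x + sin \<phi> *\<^sub>R cross3 u x + ((1 - cos \<phi>) * (u \<bullet> x)) *\<^sub>R u)"

definition halfturn :: "real^3 \<Rightarrow> real^3 \<Rightarrow> real^3" where
  "halfturn v = rot v pi"

text \<open>Axis of a rotation (different from the identity): its fixed line.\<close>
definition rot_axis :: "(real^3 \<Rightarrow> real^3) \<Rightarrow> (real^3) set" where
  "rot_axis f = {x. f x = x}"

definition det3 :: "real^3 \<Rightarrow> real^3 \<Rightarrow> real^3 \<Rightarrow> real" where
  "det3 a b c = det (transpose (vector [a, b, c] :: real^3^3))"

end

theory Submission
  imports Defs
begin

unbundle cross3_syntax

text \<open>A half-turn about a unit vector \<open>u\<close> is the rotation induced by the pure quaternion \<open>(0, u)\<close>,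
  so \<open>A = R\<^sub>\<gamma> \<circ> R\<^sub>\<beta> \<circ> R\<^sub>\<alpha>\<close> is induced by the unit quaternion \<open>\<gamma>\<beta>\<alpha>\<close>, whose vector part
  \<open>V = w - (\<gamma>\<bullet>\<beta>) \<alpha>\<close> with \<open>w = (\<gamma>\<bullet>\<alpha>) \<beta> - (\<alpha>\<bullet>\<beta>) \<gamma> \<perp> \<alpha>\<close> spans the axis of \<open>A\<close> and whose scalar
  part is \<open>det\<^sub>3(\<alpha>\<beta>\<gamma>)\<close>. Since \<open>R\<^sub>\<alpha>\<close> is an involution, \<open>B = R\<^sub>\<alpha> \<circ> A \<circ> R\<^sub>\<alpha>\<close> has axis
  \<open>R\<^sub>\<alpha>(\<real>V)\<close>, and a half-turn about \<open>\<alpha>\<close> preserves the line \<open>\<real>V\<close> exactly when \<open>V \<perp> \<alpha>\<close> or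
  \<open>V \<in> \<real>\<alpha>\<close>, i.e. when \<open>\<gamma>\<bullet>\<beta> = 0\<close> or \<open>w = 0\<close>. These two alternatives are the cases of the
  theorem, and they also locate a unit vector \<open>b\<close> on the axis: \<open>b \<perp> \<alpha>\<close>, resp. \<open>b = \<plusminus>\<alpha>\<close>.\<close>

text \<open>The rotation \<open>x \<mapsto> q x q\<^sup>*\<close> for the quaternion \<open>q = (t, v)\<close>, written out in vector notation.\<close>
definition quat_rot :: "real \<Rightarrow> real^3 \<Rightarrow> real^3 \<Rightarrow> real^3" where
  "quat_rot t v x = (t\<^sup>2 - v \<bullet> v) *\<^sub>R x + (2 * (v \<bullet> x)) *\<^sub>R v + (2 * t) *\<^sub>R (v \<times> x)"

lemma quat_rot_compose:
  "quat_rot s u (quat_rot t v x) = quat_rot (s * t - u \<bullet> v) (s *\<^sub>R v + t *\<^sub>R u + u \<times> v) x"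
  unfolding quat_rot_def
  by (simp add: cross3_def inner_vec_def sum_3 vec_eq_iff forall_3 power2_eq_square algebra_simps)

lemma quat_rot_zero: "t\<^sup>2 = 1 \<Longrightarrow> quat_rot t 0 = id"
  by (simp add: quat_rot_def fun_eq_iff)

lemma fixed_points_quat_rot:
  assumes unit: "t\<^sup>2 + v \<bullet> v = 1" and "v \<noteq> 0"
  shows "{x. quat_rot t v x = x} = span {v}"
proof (intro antisym subsetI)
  fix x assume "x \<in> {x. quat_rot t v x = x}"
  then have "x \<bullet> quat_rot t v x = x \<bullet> x" by simp
  then have "(t\<^sup>2 - v \<bullet> v) * (x \<bullet> x) + 2 * (v \<bullet> x)\<^sup>2 = x \<bullet> x"
    by (simp add: quat_rot_def inner_add_right inner_commute dot_cross_self power2_eq_square)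
  moreover have "t\<^sup>2 = 1 - v \<bullet> v" using unit by simp
  ultimately have "(v \<bullet> x)\<^sup>2 = (v \<bullet> v) * (x \<bullet> x)"
    by (simp add: algebra_simps)
  moreover have "(norm (v \<times> x))\<^sup>2 + (v \<bullet> x)\<^sup>2 = (v \<bullet> v) * (x \<bullet> x)"
    using norm_cross_dot[of v x] by (simp add: power_mult_distrib power2_norm_eq_inner)
  ultimately have "v \<times> x = 0" by simp
  with \<open>v \<noteq> 0\<close> show "x \<in> span {v}"
    by (auto simp: cross_eq_0 collinear_lemma span_singleton)
next
  fix x assume "x \<in> span {v}"
  then obtain k where x: "x = k *\<^sub>R v" by (auto simp: span_singleton)
  have "quat_rot t v x = (k * (t\<^sup>2 + v \<bullet> v)) *\<^sub>R v"
    unfolding x by (simp add: quat_rot_def cross_mult_right vec_eq_iff algebra_simps)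
  with unit x show "x \<in> {x. quat_rot t v x = x}" by simp
qed

lemma quat_rot_pure3:
  "quat_rot 0 c \<circ> quat_rot 0 b \<circ> quat_rot 0 a
     = quat_rot (a \<bullet> (b \<times> c)) ((c \<bullet> a) *\<^sub>R b - (a \<bullet> b) *\<^sub>R c - (c \<bullet> b) *\<^sub>R a)"
proof -
  have t: "- (c \<bullet> (b \<times> a)) = a \<bullet> (b \<times> c)"
    by (simp add: cross3_simps)
  have v: "c \<times> (b \<times> a) - (b \<bullet> a) *\<^sub>R c = (c \<bullet> a) *\<^sub>R b - (a \<bullet> b) *\<^sub>R c - (c \<bullet> b) *\<^sub>R a"
    by (simp add: cross3_simps forall_3)
  show ?thesis
    unfolding t[symmetric] v[symmetric] by (simp add: fun_eq_iff quat_rot_compose)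
qed

lemma quat_norm_pure3:
  "(a \<bullet> (b \<times> c))\<^sup>2
     + ((c \<bullet> a) *\<^sub>R b - (a \<bullet> b) *\<^sub>R c - (c \<bullet> b) *\<^sub>R a) \<bullet> ((c \<bullet> a) *\<^sub>R b - (a \<bullet> b) *\<^sub>R c - (c \<bullet> b) *\<^sub>R a)
   = (a \<bullet> a) * (b \<bullet> b) * (c \<bullet> c)"
  by (simp add: cross3_def inner_vec_def sum_3 power2_eq_square algebra_simps)

lemma det3_eq_inner_cross: "det3 a b c = a \<bullet> (b \<times> c)"
  by (simp add: det3_def det_transpose dot_cross_det)

lemma halfturn_eq_quat_rot: "norm v = 1 \<Longrightarrow> halfturn v = quat_rot 0 v"
  by (simp add: halfturn_def rot_def quat_rot_def fun_eq_iff dot_square_norm)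

lemma halfturn_apply: "norm v = 1 \<Longrightarrow> halfturn v x = (2 * (v \<bullet> x)) *\<^sub>R v - x"
  by (simp add: halfturn_eq_quat_rot quat_rot_def dot_square_norm)

lemma halfturn_involution: "norm v = 1 \<Longrightarrow> halfturn v \<circ> halfturn v = id"
  by (simp add: halfturn_apply fun_eq_iff inner_diff_right dot_square_norm algebra_simps)

lemma linear_halfturn: "norm v = 1 \<Longrightarrow> linear (halfturn v)"
  by (simp add: halfturn_apply linear_iff inner_add_right algebra_simps)

lemma halfturn_fixes_axis: "norm v = 1 \<Longrightarrow> x \<in> span {v} \<Longrightarrow> halfturn v x = x"
  by (auto simp: halfturn_apply span_singleton dot_square_norm vec_eq_iff algebra_simps)

lemma halfturn_orthogonal: "norm v = 1 \<Longrightarrow> v \<bullet> x = 0 \<Longrightarrow> halfturn v x = - x"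
  by (simp add: halfturn_apply)

lemma rot_axis_conjugate:
  assumes "h \<circ> h = id"
  shows "rot_axis (h \<circ> f \<circ> h) = h ` rot_axis f"
proof -
  have hh: "h (h x) = x" for x
    using assms by (simp add: fun_eq_iff)
  show ?thesis
    unfolding rot_axis_def
  proof (intro equalityI subsetI)
    fix x assume "x \<in> {x. (h \<circ> f \<circ> h) x = x}"
    then have "h (h (f (h x))) = h x" by simp
    then have "f (h x) = h x" by (simp only: hh)
    then show "x \<in> h ` {x. f x = x}"
      by (intro image_eqI[of _ _ "h x"]) (simp_all add: hh)
  next
    fix x assume "x \<in> h ` {x. f x = x}"
    then obtain y where "x = h y" "f y = y" by blast
    then show "x \<in> {x. (h \<circ> f \<circ> h) x = x}" by (simp add: hh)
  qed
qed

lemma span_singleton_eq_if_scaleR_eq: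
  assumes "s \<noteq> 0" "t \<noteq> 0" "s *\<^sub>R x = t *\<^sub>R y"
  shows "span {x} = span {y}"
proof -
  from arg_cong[OF assms(3), of "scaleR (1 / s)"] assms(1) have "x = (t / s) *\<^sub>R y"
    by simp
  then have "x \<in> span {y}" by (simp add: span_base span_mul)
  moreover from arg_cong[OF assms(3), of "scaleR (1 / t)"] assms(2) have "y = (s / t) *\<^sub>R x"
    by simp
  then have "y \<in> span {x}" by (simp add: span_base span_mul)
  ultimately show ?thesis by (simp add: span_eq)
qed

lemma unit_in_span_unit:
  assumes "norm a = 1" "norm b = 1" "b \<in> span {a}"
  shows "b = a \<or> b = - a"
proof -
  obtain k where "b = k *\<^sub>R a" using assms(3) by (auto simp: span_singleton)
  moreover from this assms have "\<bar>k\<bar> = 1" by simp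
  then have "k = 1 \<or> k = -1" by arith
  ultimately show ?thesis by auto
qed

lemma scaleR_inner_diff_eq_0_iff:
  assumes "norm b = 1" "norm c = 1"
  shows "(c \<bullet> a) *\<^sub>R b - (a \<bullet> b) *\<^sub>R c = 0 \<longleftrightarrow> span {b} = span {c} \<or> (a \<bullet> b = 0 \<and> a \<bullet> c = 0)"
proof
  assume w0: "(c \<bullet> a) *\<^sub>R b - (a \<bullet> b) *\<^sub>R c = 0"
  show "span {b} = span {c} \<or> (a \<bullet> b = 0 \<and> a \<bullet> c = 0)"
  proof (cases "a \<bullet> b = 0")
    case True
    with w0 assms(1) show ?thesis by (auto simp: inner_commute)
  next
    case False
    from w0 have eq: "(c \<bullet> a) *\<^sub>R b = (a \<bullet> b) *\<^sub>R c" by simp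
    with False assms have "c \<bullet> a \<noteq> 0" by auto
    with False eq have "span {b} = span {c}"
      by (intro span_singleton_eq_if_scaleR_eq)
    then show ?thesis ..
  qed
next
  assume "span {b} = span {c} \<or> (a \<bullet> b = 0 \<and> a \<bullet> c = 0)"
  then show "(c \<bullet> a) *\<^sub>R b - (a \<bullet> b) *\<^sub>R c = 0"
  proof
    assume "span {b} = span {c}"
    then have "c \<in> span {b}" by (simp add: span_base)
    then obtain k where "c = k *\<^sub>R b" by (auto simp: span_singleton)
    then show ?thesis by (simp add: inner_commute)
  qed (simp add: inner_commute)
qed

lemma halfturn_image_span_eq_iff:
  assumes u: "norm u = 1" and "v \<noteq> 0"
  shows "halfturn u ` span {v} = span {v} \<longleftrightarrow> u \<bullet> v = 0 \<or> v \<in> span {u}"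
proof -
  have image: "halfturn u ` span {v} = span {halfturn u v}"
    using span_linear_image[OF linear_halfturn[OF u], of "{v}"] by simp
  show ?thesis
  proof
    assume "halfturn u ` span {v} = span {v}"
    with image have "halfturn u v \<in> span {v}"
      by (metis span_base singletonI)
    then obtain k where "(2 * (u \<bullet> v)) *\<^sub>R u - v = k *\<^sub>R v"
      by (auto simp: halfturn_apply[OF u] span_singleton)
    then have uv: "(2 * (u \<bullet> v)) *\<^sub>R u = (k + 1) *\<^sub>R v"
      by (simp add: algebra_simps)
    show "u \<bullet> v = 0 \<or> v \<in> span {u}"
    proof (cases "u \<bullet> v = 0")
      case False
      with uv u have "k + 1 \<noteq> 0" by auto
      with uv False have "span {u} = span {v}"
        by (intro span_singleton_eq_if_scaleR_eq) simp_all
      then show ?thesis by (simp add: span_base)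
    qed simp
  next
    assume "u \<bullet> v = 0 \<or> v \<in> span {u}"
    then have "span {halfturn u v} = span {v}"
    proof
      assume "u \<bullet> v = 0"
      then show ?thesis
        by (intro span_singleton_eq_if_scaleR_eq[of "-1" 1]) (simp_all add: halfturn_orthogonal[OF u])
    qed (simp add: halfturn_fixes_axis[OF u])
    with image show "halfturn u ` span {v} = span {v}" by simp
  qed
qed

lemma halfturn3_eq_quat_rot:
  assumes "norm a = 1" "norm b = 1" "norm c = 1"
  shows "halfturn c \<circ> halfturn b \<circ> halfturn a
           = quat_rot (det3 a b c) ((c \<bullet> a) *\<^sub>R b - (a \<bullet> b) *\<^sub>R c - (c \<bullet> b) *\<^sub>R a)"
    and "(det3 a b c)\<^sup>2
           + ((c \<bullet> a) *\<^sub>R b - (a \<bullet> b) *\<^sub>R c - (c \<bullet> b) *\<^sub>R a) \<bullet> ((c \<bullet> a) *\<^sub>R b - (a \<bullet> b) *\<^sub>R c - (c \<bullet> b) *\<^sub>R a)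
         = 1"
  using assms quat_norm_pure3[of a b c]
  by (simp_all add: halfturn_eq_quat_rot quat_rot_pure3 det3_eq_inner_cross dot_square_norm)

lemma halfturn3_eq_id_iff:
  assumes "norm a = 1" "norm b = 1" "norm c = 1"
  shows "halfturn c \<circ> halfturn b \<circ> halfturn a = id \<longleftrightarrow> (det3 a b c)\<^sup>2 = 1"
proof -
  define v where "v = (c \<bullet> a) *\<^sub>R b - (a \<bullet> b) *\<^sub>R c - (c \<bullet> b) *\<^sub>R a"
  have A: "halfturn c \<circ> halfturn b \<circ> halfturn a = quat_rot (det3 a b c) v"
    and unit: "(det3 a b c)\<^sup>2 + v \<bullet> v = 1"
    unfolding v_def using halfturn3_eq_quat_rot[OF assms] by auto
  show ?thesis
  proof
    assume id: "halfturn c \<circ> halfturn b \<circ> halfturn a = id"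
    show "(det3 a b c)\<^sup>2 = 1"
    proof (rule ccontr)
      assume "(det3 a b c)\<^sup>2 \<noteq> 1"
      with unit have "v \<noteq> 0" by auto
      have "span {v} = {x. quat_rot (det3 a b c) v x = x}"
        using fixed_points_quat_rot[OF unit \<open>v \<noteq> 0\<close>] by simp
      also have "\<dots> = UNIV"
        using id A by (simp add: fun_eq_iff)
      finally have "dim {v} = dim (UNIV :: (real^3) set)"
        by (metis dim_span)
      with \<open>v \<noteq> 0\<close> show False by simp
    qed
  next
    assume "(det3 a b c)\<^sup>2 = 1"
    with unit have "v = 0" by simp
    with A \<open>(det3 a b c)\<^sup>2 = 1\<close> show "halfturn c \<circ> halfturn b \<circ> halfturn a = id"
      by (simp add: quat_rot_zero)
  qed
qed

lemma halfturn3_axis: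
  assumes "norm \<alpha> = 1" "norm \<beta> = 1" "norm \<gamma> = 1"
    and "halfturn \<gamma> \<circ> halfturn \<beta> \<circ> halfturn \<alpha> \<noteq> id"
  defines "w \<equiv> (\<gamma> \<bullet> \<alpha>) *\<^sub>R \<beta> - (\<alpha> \<bullet> \<beta>) *\<^sub>R \<gamma>"
  shows "rot_axis (halfturn \<gamma> \<circ> halfturn \<beta> \<circ> halfturn \<alpha>) = span {w - (\<gamma> \<bullet> \<beta>) *\<^sub>R \<alpha>}"
    and "w - (\<gamma> \<bullet> \<beta>) *\<^sub>R \<alpha> \<noteq> 0"
proof -
  note A = halfturn3_eq_quat_rot[OF assms(1-3), folded w_def]
  have "(det3 \<alpha> \<beta> \<gamma>)\<^sup>2 \<noteq> 1"
    using halfturn3_eq_id_iff assms(1-4) by blast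
  with A(2) show nonzero: "w - (\<gamma> \<bullet> \<beta>) *\<^sub>R \<alpha> \<noteq> 0" by auto
  show "rot_axis (halfturn \<gamma> \<circ> halfturn \<beta> \<circ> halfturn \<alpha>) = span {w - (\<gamma> \<bullet> \<beta>) *\<^sub>R \<alpha>}"
    unfolding rot_axis_def A(1) using fixed_points_quat_rot[OF A(2) nonzero] .
qed

lemma halfturn3_same_axis_iff:
  assumes "norm \<alpha> = 1" "norm \<beta> = 1" "norm \<gamma> = 1"
    and "halfturn \<gamma> \<circ> halfturn \<beta> \<circ> halfturn \<alpha> \<noteq> id"
  defines "w \<equiv> (\<gamma> \<bullet> \<alpha>) *\<^sub>R \<beta> - (\<alpha> \<bullet> \<beta>) *\<^sub>R \<gamma>"
  shows "rot_axis (halfturn \<gamma> \<circ> halfturn \<beta> \<circ> halfturn \<alpha>)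
           = rot_axis (halfturn \<alpha> \<circ> halfturn \<gamma> \<circ> halfturn \<beta>)
         \<longleftrightarrow> \<gamma> \<bullet> \<beta> = 0 \<or> w = 0"
proof -
  define v where "v = w - (\<gamma> \<bullet> \<beta>) *\<^sub>R \<alpha>"
  note axis = halfturn3_axis[OF assms(1-4), folded w_def, folded v_def]
  have "halfturn \<alpha> (halfturn \<alpha> x) = x" for x
    using halfturn_involution[OF assms(1)] by (simp add: fun_eq_iff)
  then have "halfturn \<alpha> \<circ> halfturn \<gamma> \<circ> halfturn \<beta>
               = halfturn \<alpha> \<circ> (halfturn \<gamma> \<circ> halfturn \<beta> \<circ> halfturn \<alpha>) \<circ> halfturn \<alpha>"
    by (simp add: fun_eq_iff)
  then have axis_B: "rot_axis (halfturn \<alpha> \<circ> halfturn \<gamma> \<circ> halfturn \<beta>) = halfturn \<alpha> ` span {v}"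
    using rot_axis_conjugate[OF halfturn_involution[OF assms(1)]] axis(1) by simp
  have \<alpha>w: "\<alpha> \<bullet> w = 0"
    unfolding w_def by (simp add: inner_diff_right inner_commute)
  have "\<alpha> \<bullet> v = - (\<gamma> \<bullet> \<beta>)"
    using \<alpha>w assms(1) by (simp add: v_def inner_diff_right dot_square_norm)
  moreover have "v \<in> span {\<alpha>} \<longleftrightarrow> w = 0"
  proof
    assume "v \<in> span {\<alpha>}"
    then have "w \<in> span {\<alpha>}"
      unfolding v_def by (metis diff_add_cancel span_add span_base span_mul singletonI)
    then obtain k where "w = k *\<^sub>R \<alpha>" by (auto simp: span_singleton)
    with \<alpha>w assms(1) show "w = 0" by (simp add: dot_square_norm)
  qed (simp add: v_def span_base span_mul span_neg)
  ultimately show ?thesis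
    using halfturn_image_span_eq_iff[OF assms(1) axis(2)] axis(1) axis_B by auto
qed

lemma halfturn3_axis_point:
  assumes "norm \<alpha> = 1" "norm \<beta> = 1" "norm \<gamma> = 1"
    and "halfturn \<gamma> \<circ> halfturn \<beta> \<circ> halfturn \<alpha> \<noteq> id"
    and "norm b = 1" "b \<in> rot_axis (halfturn \<gamma> \<circ> halfturn \<beta> \<circ> halfturn \<alpha>)"
  defines "w \<equiv> (\<gamma> \<bullet> \<alpha>) *\<^sub>R \<beta> - (\<alpha> \<bullet> \<beta>) *\<^sub>R \<gamma>"
  shows "w = 0 \<Longrightarrow> (b = \<alpha> \<or> b = - \<alpha>) \<and> halfturn \<alpha> b = b"
    and "\<gamma> \<bullet> \<beta> = 0 \<Longrightarrow> halfturn \<alpha> b = - b"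
proof -
  obtain k where b: "b = k *\<^sub>R (w - (\<gamma> \<bullet> \<beta>) *\<^sub>R \<alpha>)"
    using assms(6) halfturn3_axis(1)[OF assms(1-4), folded w_def] by (auto simp: span_singleton)
  show "(b = \<alpha> \<or> b = - \<alpha>) \<and> halfturn \<alpha> b = b" if "w = 0"
  proof -
    have "b \<in> span {\<alpha>}"
      using b that by (simp add: span_base span_mul span_neg)
    then show ?thesis
      using unit_in_span_unit assms(1,5) halfturn_fixes_axis[OF assms(1)] by blast
  qed
  show "halfturn \<alpha> b = - b" if "\<gamma> \<bullet> \<beta> = 0"
    using b that halfturn_orthogonal[OF assms(1)]
    by (simp add: w_def inner_diff_right inner_commute)
qed

theorem mainTheorem6:
  fixes \<alpha> \<beta> \<gamma> :: "real^3"
  assumes "norm \<alpha> = 1" and "norm \<beta> = 1" and "norm \<gamma> = 1"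
    and "halfturn \<gamma> \<circ> halfturn \<beta> \<circ> halfturn \<alpha> \<noteq> id"
  shows "(rot_axis (halfturn \<gamma> \<circ> halfturn \<beta> \<circ> halfturn \<alpha>)
           = rot_axis (halfturn \<alpha> \<circ> halfturn \<gamma> \<circ> halfturn \<beta>)
         \<longleftrightarrow> (span {\<beta>} = span {\<gamma>}
              \<or> (\<gamma> \<bullet> \<beta> = 0 \<and> (det3 \<alpha> \<beta> \<gamma>)\<^sup>2 \<noteq> 1)
              \<or> (\<alpha> \<bullet> \<beta> = 0 \<and> \<alpha> \<bullet> \<gamma> = 0 \<and> \<gamma> \<bullet> \<beta> \<noteq> 0)))
       \<and> (\<forall>b. norm b = 1
           \<and> rot_axis (halfturn \<gamma> \<circ> halfturn \<beta> \<circ> halfturn \<alpha>)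
             = rot_axis (halfturn \<alpha> \<circ> halfturn \<gamma> \<circ> halfturn \<beta>)
           \<and> b \<in> rot_axis (halfturn \<gamma> \<circ> halfturn \<beta> \<circ> halfturn \<alpha>)
         \<longrightarrow> (let c = halfturn \<alpha> b; a = halfturn \<gamma> b in
              (span {\<beta>} = span {\<gamma>} \<longrightarrow> b = c \<and> (c = \<alpha> \<or> c = - \<alpha>))
            \<and> (\<gamma> \<bullet> \<beta> = 0 \<and> (det3 \<alpha> \<beta> \<gamma>)\<^sup>2 \<noteq> 1 \<longrightarrow> c = - b)
            \<and> (\<alpha> \<bullet> \<beta> = 0 \<and> \<alpha> \<bullet> \<gamma> = 0 \<and> \<gamma> \<bullet> \<beta> \<noteq> 0
                 \<longrightarrow> - a = b \<and> b = c \<and> (c = \<alpha> \<or> c = - \<alpha>))))"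
proof -
  define w where "w = (\<gamma> \<bullet> \<alpha>) *\<^sub>R \<beta> - (\<alpha> \<bullet> \<beta>) *\<^sub>R \<gamma>"
  have w0: "w = 0 \<longleftrightarrow> span {\<beta>} = span {\<gamma>} \<or> (\<alpha> \<bullet> \<beta> = 0 \<and> \<alpha> \<bullet> \<gamma> = 0)"
    unfolding w_def using scaleR_inner_diff_eq_0_iff[OF assms(2,3)] .
  have "(det3 \<alpha> \<beta> \<gamma>)\<^sup>2 \<noteq> 1"
    using halfturn3_eq_id_iff assms by blast
  moreover note halfturn3_same_axis_iff[OF assms, folded w_def]
  moreover have "(- halfturn \<gamma> b = b) \<and> b = halfturn \<alpha> b \<and> (b = \<alpha> \<or> b = - \<alpha>)"
    if "norm b = 1" "b \<in> rot_axis (halfturn \<gamma> \<circ> halfturn \<beta> \<circ> halfturn \<alpha>)"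
      and "\<alpha> \<bullet> \<beta> = 0" "\<alpha> \<bullet> \<gamma> = 0" for b
  proof -
    from halfturn3_axis_point(1)[OF assms that(1,2), folded w_def] that w0 have "b = \<alpha> \<or> b = - \<alpha>" "b = halfturn \<alpha> b" by auto
    moreover from this that(4) have "\<gamma> \<bullet> b = 0" by (auto simp: inner_commute)
    ultimately show ?thesis by (simp add: halfturn_orthogonal[OF assms(3)])
  qed
  ultimately show ?thesis
    using w0 halfturn3_axis_point[OF assms, folded w_def] by (simp add: Let_def) blast
qed

end
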